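(* Let $1\to K\to G\to Q\to1$ be a short exact sequence of groups. If $K$ and $Q$ are both n-slender, then $G$ is n-slender; if $K$ and $Q$ are both cm-slender, then $G$ is cm-slender; if $K$ and $Q$ are both lcH-slender, then $G$ is lcH-slender.
   Context: Let $E=\bigcup_{n\in\mathbb{N}}C((0,\tfrac1n),\tfrac1n)\subseteq\mathbb{R}^2$ be the Hawaiian earring ($C(q,r)$ the circle of center $q$, radius $r$), and $\mathbb{H}=\pi_1(E,(0,0))$. For $N\in\mathbb{N}$ let $p_N:\mathbb{H}\to\mathbb{H}$ be induced by the retraction of $E$ onto the union of the first $N$ circles collapsing the other circles to the base point. A group $G$ is n-slender if for every homomorphism $\phi:\mathbb{H}\to G$ there is $N$ with $\phi=\phi\circ p_N$. A group is cm-slender if every homomorphism to it from a completely metrizable topological group has open kernel, and lcH-slender if every homomorphism to it from a locally compact Hausdorff topological group has open kernel. *)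

theory Defs
  imports "HOL-Analysis.Analysis" "HOL-Algebra.Coset"
begin

text \<open>The plane is modelled as the complex numbers; the n-th circle (n >= 1)
  has centre (0, 1/n) = i/n and radius 1/n.\<close>

definition HE_circle :: "nat \<Rightarrow> complex set" where
  "HE_circle n = sphere (\<i> * complex_of_real (1 / real n)) (1 / real n)"

definition HE :: "complex set" where
  "HE = (\<Union>n\<in>{1..}. HE_circle n)"

definition HE_loop :: "(real \<Rightarrow> complex) \<Rightarrow> bool" where
  "HE_loop g \<longleftrightarrow> path g \<and> path_image g \<subseteq> HE \<and> pathstart g = 0 \<and> pathfinish g = 0"

definition HE_class :: "(real \<Rightarrow> complex) \<Rightarrow> (real \<Rightarrow> complex) set" where
  "HE_class g = {h. HE_loop h \<and> homotopic_paths HE g h}"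

definition HE_group :: "(real \<Rightarrow> complex) set monoid" where
  "HE_group = \<lparr> carrier = HE_class ` {g. HE_loop g},
                mult = (\<lambda>A B. HE_class ((SOME a. a \<in> A) +++ (SOME b. b \<in> B))),
                one = HE_class (\<lambda>_. 0) \<rparr>"

definition HE_retract :: "nat \<Rightarrow> complex \<Rightarrow> complex" where
  "HE_retract N z = (if z \<in> (\<Union>n\<in>{1..N}. HE_circle n) then z else 0)"

definition HE_proj :: "nat \<Rightarrow> (real \<Rightarrow> complex) set \<Rightarrow> (real \<Rightarrow> complex) set" where
  "HE_proj N A = HE_class (HE_retract N \<circ> (SOME a. a \<in> A))"

definition n_slender :: "('g, 'c) monoid_scheme \<Rightarrow> bool" where
  "n_slender G \<longleftrightarrow>
     (\<forall>\<phi> \<in> hom HE_group G. \<exists>N. \<forall>x \<in> carrier HE_group. \<phi> x = \<phi> (HE_proj N x))"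

definition topological_group :: "'h monoid \<Rightarrow> 'h topology \<Rightarrow> bool" where
  "topological_group H T \<longleftrightarrow> group H \<and> topspace T = carrier H \<and>
     continuous_map (prod_topology T T) T (\<lambda>(x, y). x \<otimes>\<^bsub>H\<^esub> y) \<and>
     continuous_map T T (\<lambda>x. inv\<^bsub>H\<^esub> x)"

text \<open>Slenderness with respect to source groups whose carriers live in the
  type 'h (the theorem below is stated for an arbitrary type 'h).\<close>
definition cm_slender :: "'h itself \<Rightarrow> ('g, 'c) monoid_scheme \<Rightarrow> bool" where
  "cm_slender _ G \<longleftrightarrow>
     (\<forall>(H :: 'h monoid) T \<phi>. topological_group H T \<and> completely_metrizable_space T \<and>
        \<phi> \<in> hom H G \<longrightarrow> openin T (kernel H G \<phi>))"

definition lcH_slender :: "'h itself \<Rightarrow> ('g, 'c) monoid_scheme \<Rightarrow> bool" where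
  "lcH_slender _ G \<longleftrightarrow>
     (\<forall>(H :: 'h monoid) T \<phi>. topological_group H T \<and> locally_compact_space T \<and>
        Hausdorff_space T \<and> \<phi> \<in> hom H G \<longrightarrow> openin T (kernel H G \<phi>))"

definition short_exact ::
  "('k, 'a) monoid_scheme \<Rightarrow> ('g, 'b) monoid_scheme \<Rightarrow> ('q, 'c) monoid_scheme \<Rightarrow>
   ('k \<Rightarrow> 'g) \<Rightarrow> ('g \<Rightarrow> 'q) \<Rightarrow> bool" where
  "short_exact K G Q i f \<longleftrightarrow> group K \<and> group G \<and> group Q \<and>
     i \<in> hom K G \<and> inj_on i (carrier K) \<and>
     f \<in> hom G Q \<and> f ` carrier G = carrier Q \<and>
     i ` carrier K = kernel G Q f"

end

(* Let phi : pi_1(HE) -> G. As Q is n-slender, f o phi factors through some p_N and therefore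
   kills every loop in the N-tail, the union of the circles of index > N. The dilations mapping
   the n-th circle onto the (n+N)-th embed HE onto this tail, so composing phi with the induced
   shift gives a homomorphism into the kernel of f, i.e. into K. Since K is n-slender, phi kills
   all loops in a smaller tail, and a homomorphism killing the M-tail factors through p_M: a
   loop is a finite product of loops each lying in one of the first M circles or avoiding their
   tops, and the latter deform into the M-tail.
   For cm- and lcH-slenderness, the kernel U of f o phi is an open subgroup, completely
   metrizable resp. locally compact Hausdorff in its own right, and on U the map phi lifts to K. *)

theory Submission
  imports Defs
begin

section \<open>Short exact sequences and open kernels\<close>

lemma short_exact_lift:
  assumes se: "short_exact K G Q i f" and \<phi>: "\<phi> \<in> hom H G"
    and trivial: "\<And>x. x \<in> carrier H \<Longrightarrow> f (\<phi> x) = \<one>\<^bsub>Q\<^esub>"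
  obtains \<psi> where "\<psi> \<in> hom H K" and "kernel H K \<psi> = kernel H G \<phi>"
proof
  from se have K: "group K" and G: "group G" and i: "i \<in> hom K G" and inj: "inj_on i (carrier K)"
    and im: "i ` carrier K = kernel G Q f"
    unfolding short_exact_def by auto
  let ?\<psi> = "\<lambda>x. inv_into (carrier K) i (\<phi> x)"
  have in_image: "\<phi> x \<in> i ` carrier K" if "x \<in> carrier H" for x
    using that trivial \<phi> im unfolding kernel_def hom_def by auto
  have \<psi>_carrier: "?\<psi> x \<in> carrier K" and i_\<psi>: "i (?\<psi> x) = \<phi> x" if "x \<in> carrier H" for x
    using in_image[OF that] by (auto simp: inv_into_into f_inv_into_f)
  show "?\<psi> \<in> hom H K"
  proof (rule homI)
    fix x y assume x: "x \<in> carrier H" and y: "y \<in> carrier H"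
    have "i (?\<psi> x \<otimes>\<^bsub>K\<^esub> ?\<psi> y) = \<phi> (x \<otimes>\<^bsub>H\<^esub> y)"
      using i \<phi> x y \<psi>_carrier i_\<psi> unfolding hom_def by auto
    then show "?\<psi> (x \<otimes>\<^bsub>H\<^esub> y) = ?\<psi> x \<otimes>\<^bsub>K\<^esub> ?\<psi> y"
      using inv_into_f_f[OF inj] \<psi>_carrier[OF x] \<psi>_carrier[OF y] K by (metis group.is_monoid monoid.m_closed)
  qed (rule \<psi>_carrier)
  have "i \<one>\<^bsub>K\<^esub> = \<one>\<^bsub>G\<^esub>"
    using i K G by (simp add: group_hom.hom_one group_hom_axioms_def group_hom_def)
  then have "?\<psi> x = \<one>\<^bsub>K\<^esub> \<longleftrightarrow> \<phi> x = \<one>\<^bsub>G\<^esub>" if "x \<in> carrier H" for x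
    using i_\<psi>[OF that] inv_into_f_f[OF inj, of "\<one>\<^bsub>K\<^esub>"] K by (metis group.is_monoid monoid.one_closed)
  then show "kernel H K ?\<psi> = kernel H G \<phi>"
    unfolding kernel_def by auto
qed

lemma topological_group_open_subgroup:
  assumes tg: "topological_group H T" and U: "subgroup U H" "openin T U"
  shows "topological_group (H\<lparr>carrier := U\<rparr>) (subtopology T U)"
proof -
  from tg have H: "group H" and T: "topspace T = carrier H"
    and mult: "continuous_map (prod_topology T T) T (\<lambda>(x, y). x \<otimes>\<^bsub>H\<^esub> y)"
    and inv: "continuous_map T T (\<lambda>x. inv\<^bsub>H\<^esub> x)"
    unfolding topological_group_def by auto
  have TU: "topspace (subtopology T U) = U"
    using T U by (auto dest: subgroup.subset)
  have "continuous_map (prod_topology (subtopology T U) (subtopology T U)) (subtopology T U)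
          (\<lambda>(x, y). x \<otimes>\<^bsub>H\<^esub> y)"
    unfolding subtopology_Times[symmetric] continuous_map_in_subtopology
    using continuous_map_from_subtopology[OF mult] TU U by (auto simp: subgroup.m_closed)
  moreover have "continuous_map (subtopology T U) (subtopology T U) (\<lambda>x. inv\<^bsub>H\<lparr>carrier := U\<rparr>\<^esub> x)"
  proof (rule continuous_map_eq)
    show "continuous_map (subtopology T U) (subtopology T U) (\<lambda>x. inv\<^bsub>H\<^esub> x)"
      unfolding continuous_map_in_subtopology
      using continuous_map_from_subtopology[OF inv] TU U by (auto simp: subgroup.m_inv_closed)
  qed (use TU U H in \<open>simp add: group.m_inv_consistent\<close>)
  ultimately show ?thesis
    unfolding topological_group_def using subgroup.subgroup_is_group[OF U(1) H] TU by simp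
qed

lemma short_exact_open_kernel_extension:
  fixes P :: "'h topology \<Rightarrow> bool"
  assumes se: "short_exact K G Q i f"
    and P_open: "\<And>T U. P T \<Longrightarrow> openin T U \<Longrightarrow> P (subtopology T U)"
    and K: "\<forall>(H :: 'h monoid) T \<psi>. topological_group H T \<and> P T \<and> \<psi> \<in> hom H K \<longrightarrow> openin T (kernel H K \<psi>)"
    and Q: "\<forall>(H :: 'h monoid) T \<psi>. topological_group H T \<and> P T \<and> \<psi> \<in> hom H Q \<longrightarrow> openin T (kernel H Q \<psi>)"
  shows "\<forall>(H :: 'h monoid) T \<phi>. topological_group H T \<and> P T \<and> \<phi> \<in> hom H G \<longrightarrow> openin T (kernel H G \<phi>)"
proof (intro allI impI, elim conjE)
  fix H :: "'h monoid" and T \<phi>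
  assume tg: "topological_group H T" and PT: "P T" and \<phi>: "\<phi> \<in> hom H G"
  from se have Q_grp: "group Q" and f: "f \<in> hom G Q" unfolding short_exact_def by auto
  have H: "group H" using tg unfolding topological_group_def by auto
  define U where "U = kernel H Q (\<lambda>x. f (\<phi> x))"
  have f\<phi>: "(\<lambda>x. f (\<phi> x)) \<in> hom H Q" using hom_compose[OF \<phi> f] by (simp add: comp_def)
  have U_open: "openin T U" unfolding U_def using Q tg PT f\<phi> by blast
  have U_subgroup: "subgroup U H"
    unfolding U_def using f\<phi> H Q_grp by (simp add: group_hom.subgroup_kernel group_hom_axioms_def group_hom_def)
  have "\<phi> \<in> hom (H\<lparr>carrier := U\<rparr>) G" using \<phi> unfolding U_def hom_def kernel_def by auto
  moreover have "f (\<phi> x) = \<one>\<^bsub>Q\<^esub>" if "x \<in> carrier (H\<lparr>carrier := U\<rparr>)" for x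
    using that unfolding U_def kernel_def by auto
  ultimately obtain \<psi> where \<psi>: "\<psi> \<in> hom (H\<lparr>carrier := U\<rparr>) K"
    and ker: "kernel (H\<lparr>carrier := U\<rparr>) K \<psi> = kernel (H\<lparr>carrier := U\<rparr>) G \<phi>"
    using short_exact_lift[OF se] by blast
  have "kernel (H\<lparr>carrier := U\<rparr>) G \<phi> = kernel H G \<phi>"
    using f \<phi> U_subgroup Q_grp se unfolding U_def kernel_def short_exact_def
    by (auto simp: group_hom.hom_one group_hom_axioms_def group_hom_def)
  moreover have "openin (subtopology T U) (kernel (H\<lparr>carrier := U\<rparr>) K \<psi>)"
    using K topological_group_open_subgroup[OF tg U_subgroup U_open] P_open[OF PT U_open] \<psi> by blast
  ultimately show "openin T (kernel H G \<phi>)"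
    using U_open ker by (metis openin_trans_full)
qed

lemma cm_slender_extension:
  assumes "short_exact K G Q i f" "cm_slender TYPE('h) K" "cm_slender TYPE('h) Q"
  shows "cm_slender TYPE('h) G"
  using short_exact_open_kernel_extension[where P = completely_metrizable_space, OF assms(1)]
    completely_metrizable_space_openin assms(2,3)
  unfolding cm_slender_def by blast

lemma lcH_slender_extension:
  assumes "short_exact K G Q i f" "lcH_slender TYPE('h) K" "lcH_slender TYPE('h) Q"
  shows "lcH_slender TYPE('h) G"
proof -
  have "locally_compact_space (subtopology T U) \<and> Hausdorff_space (subtopology T U)"
    if "locally_compact_space T \<and> Hausdorff_space T" "openin T U" for T :: "'h topology" and U
    using that by (auto intro: locally_compact_space_open_subset Hausdorff_space_subtopology)
  from short_exact_open_kernel_extension[where P = "\<lambda>T. locally_compact_space T \<and> Hausdorff_space T",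
      OF assms(1) this] assms(2,3)
  show ?thesis
    unfolding lcH_slender_def by (simp add: conj_assoc)
qed

section \<open>Geometry of the Hawaiian earring\<close>

definition HE_centre :: "nat \<Rightarrow> complex" where
  "HE_centre n = \<i> * complex_of_real (1 / real n)"

definition HE_top :: "nat \<Rightarrow> complex" where
  "HE_top n = 2 * HE_centre n"

lemma HE_circle_sphere: "HE_circle n = sphere (HE_centre n) (1 / real n)"
  unfolding HE_circle_def HE_centre_def ..

lemma norm_HE_centre: "cmod (HE_centre n) = 1 / real n"
  unfolding HE_centre_def by (simp only: norm_mult norm_ii norm_of_real) simp

lemma HE_circle_iff:
  assumes "n \<ge> 1"
  shows "z \<in> HE_circle n \<longleftrightarrow> real n * (cmod z)^2 = 2 * Im z"
proof -
  have n: "real n > 0" using assms by simp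
  have "z \<in> HE_circle n \<longleftrightarrow> (cmod (HE_centre n - z))^2 = (1 / real n)^2"
    unfolding HE_circle_sphere using n by (simp add: dist_norm power2_eq_iff_nonneg)
  also have "(cmod (HE_centre n - z))^2 = (Re z)^2 + (1 / real n - Im z)^2"
    unfolding HE_centre_def by (simp add: cmod_power2 power2_commute)
  also have "\<dots> = (1 / real n)^2 \<longleftrightarrow> real n * ((Re z)^2 + (Im z)^2) = 2 * Im z"
  proof -
    have "(Re z)^2 + (1 / real n - Im z)^2 - (1 / real n)^2 = (Re z)^2 + (Im z)^2 - 2 * Im z / real n"
      using n by (simp add: power2_eq_square field_simps)
    moreover have "(Re z)^2 + (Im z)^2 - 2 * Im z / real n = 0
        \<longleftrightarrow> real n * ((Re z)^2 + (Im z)^2) = 2 * Im z"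
      using n by (simp add: field_simps)
    ultimately show ?thesis by linarith
  qed
  finally show ?thesis by (simp add: cmod_power2)
qed

lemma mem_HE_iff: "z \<in> HE \<longleftrightarrow> (\<exists>n\<ge>1. real n * (cmod z)^2 = 2 * Im z)"
  unfolding HE_def using HE_circle_iff by auto

lemma HE_circleE:
  assumes "z \<in> HE"
  obtains n where "n \<ge> 1" "z \<in> HE_circle n"
  using assms unfolding HE_def by blast

lemma HE_circle_subset: "n \<ge> 1 \<Longrightarrow> HE_circle n \<subseteq> HE"
  unfolding HE_def by auto

lemma zero_in_HE_circle: "n \<ge> 1 \<Longrightarrow> 0 \<in> HE_circle n"
  by (simp add: HE_circle_iff)

lemma zero_in_HE: "0 \<in> HE"
  using zero_in_HE_circle HE_circle_subset by fastforce

lemma Im_HE_pos: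
  assumes "z \<in> HE" "z \<noteq> 0"
  shows "Im z > 0"
proof -
  obtain n where "n \<ge> 1" "real n * (cmod z)^2 = 2 * Im z" using assms mem_HE_iff by blast
  moreover have "real n * (cmod z)^2 > 0" using calculation(1) assms(2) by simp
  ultimately show ?thesis by simp
qed

definition HE_level :: "complex \<Rightarrow> real" where
  "HE_level z = 2 * Im z / (cmod z)^2"

definition HE_index :: "complex \<Rightarrow> nat" where
  "HE_index z = (SOME n. n \<ge> 1 \<and> z \<in> HE_circle n)"

lemma HE_level_circle: "n \<ge> 1 \<Longrightarrow> z \<in> HE_circle n \<Longrightarrow> z \<noteq> 0 \<Longrightarrow> HE_level z = real n"
  unfolding HE_level_def by (simp add: HE_circle_iff field_simps)

lemma HE_circle_unique:
  "n \<ge> 1 \<Longrightarrow> m \<ge> 1 \<Longrightarrow> z \<in> HE_circle n \<Longrightarrow> z \<in> HE_circle m \<Longrightarrow> z \<noteq> 0 \<Longrightarrow> n = m"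
  using HE_level_circle[of n z] HE_level_circle[of m z] by simp

lemma HE_index:
  assumes "z \<in> HE"
  shows "HE_index z \<ge> 1" and "z \<in> HE_circle (HE_index z)"
proof -
  have "\<exists>n. n \<ge> 1 \<and> z \<in> HE_circle n" using assms unfolding HE_def by auto
  then have "HE_index z \<ge> 1 \<and> z \<in> HE_circle (HE_index z)" unfolding HE_index_def by (rule someI_ex)
  then show "HE_index z \<ge> 1" "z \<in> HE_circle (HE_index z)" by auto
qed

lemma HE_index_eq:
  assumes "k \<ge> 1" "z \<in> HE_circle k" "z \<noteq> 0"
  shows "HE_index z = k"
proof -
  have "z \<in> HE" using assms HE_circle_subset by blast
  then show ?thesis using HE_circle_unique[OF HE_index(1) assms(1) HE_index(2) assms(2,3)] by blast
qed

lemma HE_level_index: "z \<in> HE \<Longrightarrow> z \<noteq> 0 \<Longrightarrow> HE_level z = real (HE_index z)"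
  by (rule HE_level_circle[OF HE_index])

definition HE_tail :: "nat \<Rightarrow> complex set" where
  "HE_tail M = {z \<in> HE. real (M + 1) * (cmod z)^2 \<le> 2 * Im z}"

lemma HE_tail_subset: "HE_tail M \<subseteq> HE"
  unfolding HE_tail_def by auto

lemma zero_in_HE_tail: "0 \<in> HE_tail M"
  unfolding HE_tail_def using zero_in_HE by simp

lemma HE_tail_circle_iff:
  assumes n: "n \<ge> 1" and z: "z \<in> HE_circle n"
  shows "z \<in> HE_tail M \<longleftrightarrow> z = 0 \<or> M < n"
proof (cases "z = 0")
  case False
  have "z \<in> HE_tail M \<longleftrightarrow> real (M + 1) * (cmod z)^2 \<le> real n * (cmod z)^2"
    unfolding HE_tail_def using z HE_circle_iff[OF n] HE_circle_subset[OF n] by auto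
  also have "\<dots> \<longleftrightarrow> M < n" using False by simp linarith
  finally show ?thesis using False by simp
qed (simp add: zero_in_HE_tail)

lemma HE_tail_antimono: "M \<le> M' \<Longrightarrow> HE_tail M' \<subseteq> HE_tail M"
proof
  fix z assume "M \<le> M'" "z \<in> HE_tail M'"
  moreover have "real (M + 1) * (cmod z)^2 \<le> real (M' + 1) * (cmod z)^2"
    using \<open>M \<le> M'\<close> by (intro mult_right_mono) auto
  ultimately show "z \<in> HE_tail M" unfolding HE_tail_def by auto
qed

lemma HE_retract_eq:
  assumes z: "z \<in> HE"
  shows "HE_retract M z = (if z \<in> HE_tail M then 0 else z)"
proof (cases "z = 0")
  case False
  obtain n where n: "n \<ge> 1" "z \<in> HE_circle n" using z by (rule HE_circleE)
  have "z \<in> (\<Union>k\<in>{1..M}. HE_circle k) \<longleftrightarrow> n \<le> M"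
  proof
    assume "z \<in> (\<Union>k\<in>{1..M}. HE_circle k)"
    then obtain k where k: "k \<in> {1..M}" "z \<in> HE_circle k" by blast
    then have "k = n" using HE_circle_unique[of k n z] n False by auto
    then show "n \<le> M" using k by auto
  next
    assume "n \<le> M" then show "z \<in> (\<Union>k\<in>{1..M}. HE_circle k)" using n by auto
  qed
  moreover have "z \<in> HE_tail M \<longleftrightarrow> M < n" using HE_tail_circle_iff[OF n] False by simp
  ultimately show ?thesis unfolding HE_retract_def by auto
qed (simp add: HE_retract_def)

lemma continuous_on_HE_retract: "continuous_on HE (HE_retract M)"
proof -
  let ?A = "{z::complex. real (M + 1) * (cmod z)^2 \<le> 2 * Im z}"
  let ?B = "{z::complex. 2 * Im z \<le> real M * (cmod z)^2}"
  have "continuous_on (?A \<union> ?B) (\<lambda>z. if z \<in> ?A then 0 else z)"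
  proof (rule continuous_on_If)
    show "closed ?A" "closed ?B" by (intro closed_Collect_le continuous_intros)+
    show "0 = x" if "x \<in> ?B" "x \<in> ?A" for x
    proof -
      have "real (M + 1) * (cmod x)^2 \<le> real M * (cmod x)^2" using that by auto
      then show ?thesis by (simp add: algebra_simps)
    qed
  qed (auto intro: continuous_intros)
  moreover have "HE \<subseteq> ?A \<union> ?B"
  proof
    fix z assume "z \<in> HE"
    then obtain n where "real n * (cmod z)^2 = 2 * Im z" using mem_HE_iff by blast
    moreover have "real (M + 1) * (cmod z)^2 \<le> real n * (cmod z)^2 \<or> real n * (cmod z)^2 \<le> real M * (cmod z)^2"
      by (cases "M < n") (auto intro: mult_right_mono)
    ultimately show "z \<in> ?A \<union> ?B" by auto
  qed
  ultimately show ?thesis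
    by (rule continuous_on_eq[OF continuous_on_subset]) (simp add: HE_retract_eq HE_tail_def)
qed

lemma norm_HE_top: "cmod (HE_top k) = 2 / real k"
  unfolding HE_top_def by (simp add: norm_mult norm_HE_centre)

lemma HE_top_nonzero: "k \<ge> 1 \<Longrightarrow> HE_top k \<noteq> 0"
  unfolding HE_top_def HE_centre_def by simp

lemma HE_top_in_circle_iff:
  assumes "k \<ge> 1" "n \<ge> 1"
  shows "HE_top k \<in> HE_circle n \<longleftrightarrow> n = k"
proof -
  have "real n * (cmod (HE_top k))^2 = 2 * Im (HE_top k) \<longleftrightarrow> real n * (4 / (real k)^2) = 4 / real k"
    unfolding norm_HE_top by (simp add: HE_top_def HE_centre_def power_divide)
  also have "\<dots> \<longleftrightarrow> real n = real k" using assms by (simp add: field_simps power2_eq_square)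
  finally show ?thesis using HE_circle_iff[OF assms(2)] by simp
qed

lemma HE_circle_eq_top:
  assumes n: "n \<ge> 1" and z: "z \<in> HE_circle n"
    and eq: "complex_of_real a * z = \<i> * complex_of_real b" and a: "a \<ge> 0" and b: "b > 0"
  shows "z = HE_top n"
proof -
  have "a * Re z = 0" "a * Im z = b" using arg_cong[OF eq, of Re] arg_cong[OF eq, of Im] by simp_all
  with a b have re: "Re z = 0" and im: "Im z > 0"
    by (auto simp: zero_less_mult_iff)
  have "real n * (cmod z)^2 = 2 * Im z" using z HE_circle_iff[OF n] by simp
  moreover have "(cmod z)^2 = (Im z)^2" using re by (simp add: cmod_power2)
  ultimately have "real n * (Im z * Im z) = 2 * Im z" by (simp add: power2_eq_square)
  then have "Im z = 2 / real n" using im n by (simp add: field_simps)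
  then show ?thesis using re by (simp add: complex_eq_iff HE_top_def HE_centre_def)
qed

section \<open>The fundamental group and induced endomorphisms\<close>

lemma hom_idempotent_eq_one:
  assumes "group G" "\<phi> \<in> hom H G" "x \<in> carrier H" "x \<otimes>\<^bsub>H\<^esub> x = x"
  shows "\<phi> x = \<one>\<^bsub>G\<^esub>"
proof -
  have "\<phi> x \<otimes>\<^bsub>G\<^esub> \<phi> x = \<phi> x" using hom_mult[OF assms(2,3,3)] assms(4) by simp
  then show ?thesis using group.l_cancel_one[OF assms(1), of "\<phi> x" "\<phi> x"] hom_in_carrier[OF assms(2,3)] by simp
qed

lemma HE_class_self: "HE_loop g \<Longrightarrow> g \<in> HE_class g"
  unfolding HE_class_def HE_loop_def by auto

lemma HE_class_eq:
  assumes "HE_loop g" "HE_loop h" "homotopic_paths HE g h"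
  shows "HE_class g = HE_class h"
proof -
  have "homotopic_paths HE g k \<longleftrightarrow> homotopic_paths HE h k" for k
    using assms(3) homotopic_paths_sym homotopic_paths_trans by metis
  then show ?thesis unfolding HE_class_def by auto
qed

lemma HE_class_cong:
  assumes "HE_loop g" "HE_loop h" "\<And>t. t \<in> {0..1} \<Longrightarrow> g t = h t"
  shows "HE_class g = HE_class h"
  using assms by (intro HE_class_eq homotopic_paths_eq) (auto simp: HE_loop_def)

lemma HE_class_someI:
  assumes "HE_loop g"
  shows "HE_loop (SOME a. a \<in> HE_class g)" and "homotopic_paths HE g (SOME a. a \<in> HE_class g)"
proof -
  have "(SOME a. a \<in> HE_class g) \<in> HE_class g"
    by (rule someI[where P = "\<lambda>a. a \<in> HE_class g", OF HE_class_self[OF assms]])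
  then show "HE_loop (SOME a. a \<in> HE_class g)" "homotopic_paths HE g (SOME a. a \<in> HE_class g)"
    unfolding HE_class_def by auto
qed

lemma HE_loop_join: "HE_loop g \<Longrightarrow> HE_loop h \<Longrightarrow> HE_loop (g +++ h)"
  unfolding HE_loop_def by (auto simp: path_image_join)

lemma HE_loop_const: "HE_loop (\<lambda>_. 0)"
  unfolding HE_loop_def by (auto simp: path_def path_image_def pathstart_def pathfinish_def zero_in_HE)

lemma carrier_HE_group: "x \<in> carrier HE_group \<longleftrightarrow> (\<exists>g. HE_loop g \<and> x = HE_class g)"
  unfolding HE_group_def by auto

lemma one_HE_group: "\<one>\<^bsub>HE_group\<^esub> = HE_class (\<lambda>_. 0)"
  unfolding HE_group_def by simp

lemma HE_class_mult:
  assumes g: "HE_loop g" and h: "HE_loop h"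
  shows "HE_class g \<otimes>\<^bsub>HE_group\<^esub> HE_class h = HE_class (g +++ h)"
proof -
  let ?a = "SOME a. a \<in> HE_class g" and ?b = "SOME b. b \<in> HE_class h"
  note a = HE_class_someI[OF g] and b = HE_class_someI[OF h]
  have "homotopic_paths HE (?a +++ ?b) (g +++ h)"
    using a b g by (intro homotopic_paths_join) (auto simp: homotopic_paths_sym HE_loop_def)
  then have "HE_class (?a +++ ?b) = HE_class (g +++ h)"
    by (intro HE_class_eq HE_loop_join a b g h)
  then show ?thesis unfolding HE_group_def by simp
qed

lemma HE_hom_one:
  assumes "group G" "\<phi> \<in> hom HE_group G"
  shows "\<phi> \<one>\<^bsub>HE_group\<^esub> = \<one>\<^bsub>G\<^esub>"
proof (rule hom_idempotent_eq_one[OF assms])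
  show "\<one>\<^bsub>HE_group\<^esub> \<in> carrier HE_group"
    unfolding one_HE_group carrier_HE_group using HE_loop_const by blast
  have "(\<lambda>_::real. 0::complex) +++ (\<lambda>_. 0) = (\<lambda>_. 0)" unfolding joinpaths_def by auto
  then show "\<one>\<^bsub>HE_group\<^esub> \<otimes>\<^bsub>HE_group\<^esub> \<one>\<^bsub>HE_group\<^esub> = \<one>\<^bsub>HE_group\<^esub>"
    unfolding one_HE_group HE_class_mult[OF HE_loop_const HE_loop_const] by simp
qed

definition based_HE_map :: "(complex \<Rightarrow> complex) \<Rightarrow> bool" where
  "based_HE_map F \<longleftrightarrow> continuous_on HE F \<and> F ` HE \<subseteq> HE \<and> F 0 = 0"

definition HE_induced :: "(complex \<Rightarrow> complex) \<Rightarrow> (real \<Rightarrow> complex) set \<Rightarrow> (real \<Rightarrow> complex) set" where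
  "HE_induced F x = HE_class (F \<circ> (SOME a. a \<in> x))"

lemma HE_proj_eq_induced: "HE_proj N = HE_induced (HE_retract N)"
  unfolding HE_proj_def HE_induced_def ..

lemma HE_loop_compose:
  assumes F: "based_HE_map F" and g: "HE_loop g"
  shows "HE_loop (F \<circ> g)"
  using g F path_continuous_image[of g F] continuous_on_subset[of HE F "path_image g"]
  unfolding HE_loop_def based_HE_map_def
  by (auto simp: path_image_compose pathstart_compose pathfinish_compose)

lemma HE_induced_class:
  assumes F: "based_HE_map F" and g: "HE_loop g"
  shows "HE_induced F (HE_class g) = HE_class (F \<circ> g)"
proof -
  let ?a = "SOME a. a \<in> HE_class g"
  note a = HE_class_someI[OF g]
  have "homotopic_paths HE (F \<circ> ?a) (F \<circ> g)"
    using F homotopic_paths_continuous_image[OF homotopic_paths_sym[OF a(2)], of F HE]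
    unfolding based_HE_map_def by auto
  then show ?thesis unfolding HE_induced_def
    by (intro HE_class_eq HE_loop_compose[OF F] a g)
qed

lemma HE_induced_hom:
  assumes F: "based_HE_map F"
  shows "HE_induced F \<in> hom HE_group HE_group"
proof (rule homI)
  fix x assume "x \<in> carrier HE_group"
  then obtain g where "HE_loop g" "x = HE_class g" unfolding carrier_HE_group by blast
  then show "HE_induced F x \<in> carrier HE_group"
    unfolding carrier_HE_group using HE_induced_class[OF F] HE_loop_compose[OF F] by blast
next
  fix x y assume "x \<in> carrier HE_group" "y \<in> carrier HE_group"
  then obtain g h where g: "HE_loop g" "x = HE_class g" and h: "HE_loop h" "y = HE_class h"
    unfolding carrier_HE_group by blast
  show "HE_induced F (x \<otimes>\<^bsub>HE_group\<^esub> y) = HE_induced F x \<otimes>\<^bsub>HE_group\<^esub> HE_induced F y"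
    unfolding g(2) h(2) HE_class_mult[OF g(1) h(1)]
      HE_induced_class[OF F HE_loop_join[OF g(1) h(1)]] HE_induced_class[OF F g(1)] HE_induced_class[OF F h(1)]
    by (simp add: path_compose_join HE_class_mult HE_loop_compose F g h)
qed

lemma based_HE_map_retract: "based_HE_map (HE_retract M)"
  unfolding based_HE_map_def using continuous_on_HE_retract HE_retract_eq zero_in_HE
  by (auto simp: HE_retract_def)

lemma HE_proj_tail_loop:
  assumes g: "HE_loop g" and tail: "path_image g \<subseteq> HE_tail N"
  shows "HE_proj N (HE_class g) = \<one>\<^bsub>HE_group\<^esub>"
proof -
  have "(HE_retract N \<circ> g) t = 0" if "t \<in> {0..1}" for t
  proof -
    have "g t \<in> HE_tail N" using tail that unfolding path_image_def by auto
    then show ?thesis using HE_retract_eq[of "g t" N] HE_tail_subset by auto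
  qed
  then show ?thesis
    unfolding HE_proj_eq_induced HE_induced_class[OF based_HE_map_retract g] one_HE_group
    by (intro HE_class_cong HE_loop_compose[OF based_HE_map_retract] g HE_loop_const)
qed

lemma HE_proj_circle_loop:
  assumes l: "HE_loop l" and k: "k \<in> {1..M}" and circle: "path_image l \<subseteq> HE_circle k"
  shows "HE_proj M (HE_class l) = HE_class l"
proof -
  have "(HE_retract M \<circ> l) t = l t" if "t \<in> {0..1}" for t
  proof -
    have "l t \<in> HE_circle k" using circle that unfolding path_image_def by auto
    then show ?thesis unfolding HE_retract_def using k by auto
  qed
  then show ?thesis
    unfolding HE_proj_eq_induced HE_induced_class[OF based_HE_map_retract l]
    by (intro HE_class_cong HE_loop_compose[OF based_HE_map_retract] l)
qed

lemma hom_factor_kills_tail: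
  assumes "group G" "\<psi> \<in> hom HE_group G"
    and factor: "\<forall>x\<in>carrier HE_group. \<psi> x = \<psi> (HE_proj N x)"
    and g: "HE_loop g" "path_image g \<subseteq> HE_tail N"
  shows "\<psi> (HE_class g) = \<one>\<^bsub>G\<^esub>"
  using factor g HE_proj_tail_loop[OF g] HE_hom_one[OF assms(1,2)] carrier_HE_group by metis

section \<open>Shifting the earring into a tail\<close>

text \<open>The shift maps the n-th circle onto the (n+N)-th by the dilation with ratio n/(n+N)
  (the formula recovers n as the level of z), hence it embeds the earring onto its N-tail.\<close>
definition HE_shift :: "nat \<Rightarrow> complex \<Rightarrow> complex" where
  "HE_shift N z = z * complex_of_real (2 * Im z / (2 * Im z + real N * (cmod z)^2))"

definition HE_unshift :: "nat \<Rightarrow> complex \<Rightarrow> complex" where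
  "HE_unshift N z = z * complex_of_real (2 * Im z / (2 * Im z - real N * (cmod z)^2))"

lemma HE_circle_scale:
  assumes n: "n \<ge> 1" and m: "m \<ge> 1" and z: "z \<in> HE_circle n" and c: "c = real n / real m"
  shows "z * complex_of_real c \<in> HE_circle m"
proof -
  have "c > 0" using c n m by simp
  then have "cmod (z * complex_of_real c) = cmod z * c" by (simp add: norm_mult)
  moreover have "Im (z * complex_of_real c) = Im z * c" by simp
  moreover have "real m * (cmod z * c)^2 = c * (real n * (cmod z)^2)"
    using c m by (simp add: power2_eq_square field_simps)
  ultimately show ?thesis using z HE_circle_iff[OF n] HE_circle_iff[OF m] by simp
qed

lemma HE_shift_circle:
  assumes n: "n \<ge> 1" and z: "z \<in> HE_circle n"
  shows "HE_shift N z = z * complex_of_real (real n / real (n + N))"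
proof (cases "z = 0")
  case False
  have e: "2 * Im z = real n * (cmod z)^2" using z HE_circle_iff[OF n] by simp
  have "2 * Im z / (2 * Im z + real N * (cmod z)^2) = (real n * (cmod z)^2) / (real (n + N) * (cmod z)^2)"
    unfolding e by (simp add: algebra_simps)
  also have "\<dots> = real n / real (n + N)" using False by simp
  finally show ?thesis unfolding HE_shift_def by simp
qed (simp add: HE_shift_def)

lemma HE_unshift_circle:
  assumes n: "n \<ge> 1" and z: "z \<in> HE_circle n" and N: "N < n"
  shows "HE_unshift N z = z * complex_of_real (real n / real (n - N))"
proof (cases "z = 0")
  case False
  have e: "2 * Im z = real n * (cmod z)^2" using z HE_circle_iff[OF n] by simp
  have "real n * (cmod z)^2 - real N * (cmod z)^2 = real (n - N) * (cmod z)^2"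
    using N by (simp add: of_nat_diff algebra_simps)
  then have "2 * Im z / (2 * Im z - real N * (cmod z)^2) = real n / real (n - N)"
    unfolding e using False N by (simp add: field_simps)
  then show ?thesis unfolding HE_unshift_def by simp
qed (simp add: HE_unshift_def)

lemma HE_shift_in_tail:
  assumes z: "z \<in> HE"
  shows "HE_shift N z \<in> HE_tail N"
proof -
  obtain n where n: "n \<ge> 1" "z \<in> HE_circle n" using z by (rule HE_circleE)
  have "HE_shift N z \<in> HE_circle (n + N)"
    unfolding HE_shift_circle[OF n] by (rule HE_circle_scale[OF n(1) _ n(2) refl]) (use n in simp)
  then show ?thesis using HE_tail_circle_iff[of "n + N" "HE_shift N z" N] n(1) by simp
qed

lemma HE_unshift_in_tail:
  assumes z: "z \<in> HE_tail (M + N)"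
  shows "HE_unshift N z \<in> HE_tail M"
proof (cases "z = 0")
  case False
  obtain n where n: "n \<ge> 1" "z \<in> HE_circle n" using z HE_tail_subset by (blast elim: HE_circleE)
  have Mn: "M + N < n" using HE_tail_circle_iff[OF n] z False by simp
  then have N: "N < n" by simp
  have "HE_unshift N z \<in> HE_circle (n - N)"
    unfolding HE_unshift_circle[OF n N] by (rule HE_circle_scale[OF n(1) _ n(2) refl]) (use N in simp)
  moreover have "n - N \<ge> 1" "M < n - N" using Mn by auto
  ultimately show ?thesis using HE_tail_circle_iff[of "n - N" "HE_unshift N z" M] by simp
qed (simp add: HE_unshift_def zero_in_HE_tail)

lemma HE_shift_unshift:
  assumes z: "z \<in> HE_tail N"
  shows "HE_shift N (HE_unshift N z) = z"
proof (cases "z = 0")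
  case False
  obtain n where n: "n \<ge> 1" "z \<in> HE_circle n" using z HE_tail_subset by (blast elim: HE_circleE)
  have N: "N < n" using HE_tail_circle_iff[OF n] z False by simp
  have "HE_unshift N z \<in> HE_circle (n - N)"
    unfolding HE_unshift_circle[OF n N] by (rule HE_circle_scale[OF n(1) _ n(2) refl]) (use N in simp)
  then have "HE_shift N (HE_unshift N z) = HE_unshift N z * complex_of_real (real (n - N) / real n)"
    using HE_shift_circle[of "n - N" "HE_unshift N z" N] N by simp
  also have "\<dots> = z" unfolding HE_unshift_circle[OF n N] using N by (simp flip: of_real_mult)
  finally show ?thesis .
qed (simp add: HE_shift_def HE_unshift_def)

lemma continuous_at_within_zero_linear_bound:
  fixes f :: "'a::real_normed_vector \<Rightarrow> 'b::real_normed_vector"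
  assumes "f 0 = 0" "\<And>w. w \<in> S \<Longrightarrow> norm (f w) \<le> C * norm w"
  shows "continuous (at 0 within S) f"
proof -
  have "eventually (\<lambda>w. norm (f w) \<le> C * norm w) (at 0 within S)"
    unfolding eventually_at_filter by (rule always_eventually) (use assms(2) in blast)
  moreover have "((\<lambda>w. C * norm w) \<longlongrightarrow> C * norm (0::'a)) (at 0 within S)"
    by (intro tendsto_intros)
  then have "((\<lambda>w. C * norm w) \<longlongrightarrow> 0) (at 0 within S)" by simp
  ultimately have "(f \<longlongrightarrow> 0) (at 0 within S)"
    by (rule Lim_null_comparison)
  then show ?thesis unfolding continuous_within using assms(1) by simp
qed

lemma norm_HE_shift_le:
  assumes z: "z \<in> HE"
  shows "cmod (HE_shift N z) \<le> cmod z"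
proof -
  obtain n where n: "n \<ge> 1" "z \<in> HE_circle n" using z by (rule HE_circleE)
  have c: "0 \<le> real n / real (n + N)" "real n / real (n + N) \<le> 1" using n(1) by (simp_all add: divide_le_eq)
  have "cmod (HE_shift N z) = cmod z * (real n / real (n + N))"
    unfolding HE_shift_circle[OF n] norm_mult norm_of_real using c(1) by (simp only: abs_of_nonneg)
  also have "\<dots> \<le> cmod z" using c(2) by (rule mult_left_le) simp
  finally show ?thesis .
qed

lemma norm_HE_unshift_le:
  assumes z: "z \<in> HE_tail N"
  shows "cmod (HE_unshift N z) \<le> (real N + 1) * cmod z"
proof (cases "z = 0")
  case False
  obtain n where n: "n \<ge> 1" "z \<in> HE_circle n" using z HE_tail_subset by (blast elim: HE_circleE)
  have N: "N < n" using HE_tail_circle_iff[OF n] z False by simp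
  have "real N * real (N + 1) \<le> real N * real n" using N by (intro mult_left_mono) auto
  then have "real n \<le> (real N + 1) * real (n - N)" using N by (simp add: of_nat_diff algebra_simps)
  then have c: "real n / real (n - N) \<le> real N + 1" using N by (simp add: divide_le_eq)
  have "cmod (HE_unshift N z) = real n / real (n - N) * cmod z"
    unfolding HE_unshift_circle[OF n N] norm_mult norm_of_real
    by (simp only: abs_of_nonneg mult.commute of_nat_0_le_iff divide_nonneg_nonneg)
  also have "\<dots> \<le> (real N + 1) * cmod z" using c by (rule mult_right_mono) simp
  finally show ?thesis .
qed (simp add: HE_unshift_def)

lemma continuous_on_HE_shift: "continuous_on HE (HE_shift N)"
  unfolding continuous_on_eq_continuous_within
proof
  fix z assume z: "z \<in> HE"
  show "continuous (at z within HE) (HE_shift N)"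
  proof (cases "z = 0")
    case True
    then show ?thesis
      using continuous_at_within_zero_linear_bound[of "HE_shift N" HE 1] norm_HE_shift_le
      by (simp add: HE_shift_def)
  next
    case False
    have "2 * Im z + real N * (cmod z)^2 > 0"
      using Im_HE_pos[OF z False] by (intro add_pos_nonneg) auto
    then show ?thesis unfolding HE_shift_def
      by (intro continuous_intros continuous_at_within_divide) (auto intro: continuous_intros)
  qed
qed

lemma continuous_on_HE_unshift: "continuous_on (HE_tail N) (HE_unshift N)"
  unfolding continuous_on_eq_continuous_within
proof
  fix z assume z: "z \<in> HE_tail N"
  show "continuous (at z within HE_tail N) (HE_unshift N)"
  proof (cases "z = 0")
    case True
    then show ?thesis
      using continuous_at_within_zero_linear_bound[of "HE_unshift N" "HE_tail N" "real N + 1"]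
        norm_HE_unshift_le by (simp add: HE_unshift_def)
  next
    case False
    have "2 * Im z - real N * (cmod z)^2 \<ge> (cmod z)^2"
      using z unfolding HE_tail_def by (simp add: algebra_simps)
    then have "2 * Im z - real N * (cmod z)^2 \<noteq> 0" using False by (smt (verit) zero_less_power2 zero_less_norm_iff)
    then show ?thesis unfolding HE_unshift_def
      by (intro continuous_intros continuous_at_within_divide) (auto intro: continuous_intros)
  qed
qed

lemma based_HE_map_shift: "based_HE_map (HE_shift N)"
proof -
  have "HE_shift N ` HE \<subseteq> HE" using HE_shift_in_tail HE_tail_subset by blast
  moreover have "HE_shift N 0 = 0" by (simp add: HE_shift_def)
  ultimately show ?thesis unfolding based_HE_map_def using continuous_on_HE_shift by blast
qed

section \<open>Deforming into a tail\<close>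

text \<open>Radial projection, from the centre of the n-th circle, of the point (1 - s) z: for s
  running from 0 to 1 this contracts the n-th circle minus its top onto the base point.\<close>
definition circle_contract :: "nat \<Rightarrow> real \<Rightarrow> complex \<Rightarrow> complex" where
  "circle_contract n s z =
     HE_centre n + complex_of_real (1 / real n) * sgn (complex_of_real (1 - s) * z - HE_centre n)"

lemma HE_centre_eq: "HE_centre n = \<i> / of_nat n"
  unfolding HE_centre_def by simp

lemma sgn_HE_centre:
  assumes "n \<ge> 1"
  shows "sgn (HE_centre n) = \<i>"
proof -
  have "sgn (1 / real n) = 1" "sgn \<i> = \<i>" using assms by (simp_all add: sgn_eq)
  then show ?thesis unfolding HE_centre_def sgn_mult sgn_of_real by simp
qed

lemma circle_contract_zero:
  assumes n: "n \<ge> 1"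
  shows "circle_contract n s 0 = 0"
proof -
  have "circle_contract n s 0 = HE_centre n - complex_of_real (1 / real n) * sgn (HE_centre n)"
    unfolding circle_contract_def by (simp add: sgn_minus)
  also have "\<dots> = 0" unfolding sgn_HE_centre[OF n] by (simp add: HE_centre_eq)
  finally show ?thesis .
qed

lemma circle_contract_1: "n \<ge> 1 \<Longrightarrow> circle_contract n 1 z = 0"
  using circle_contract_zero[of n 1] unfolding circle_contract_def by simp

lemma circle_contract_0:
  assumes n: "n \<ge> 1" and z: "z \<in> HE_circle n"
  shows "circle_contract n 0 z = z"
proof -
  have "cmod (z - HE_centre n) = 1 / real n"
    using z unfolding HE_circle_sphere by (simp add: dist_norm norm_minus_commute)
  then show ?thesis unfolding circle_contract_def sgn_eq using n by simp
qed

lemma circle_contract_nondegenerate: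
  assumes n: "n \<ge> 1" and z: "z \<in> HE_circle n" "z \<noteq> HE_top n" and s: "s \<in> {0..1}"
  shows "complex_of_real (1 - s) * z - HE_centre n \<noteq> 0"
proof
  assume "complex_of_real (1 - s) * z - HE_centre n = 0"
  then have "complex_of_real (1 - s) * z = \<i> * complex_of_real (1 / real n)"
    unfolding HE_centre_def by simp
  then show False using HE_circle_eq_top[OF n z(1), of "1 - s" "1 / real n"] z(2) s n by simp
qed

lemma circle_contract_in_circle:
  assumes n: "n \<ge> 1" and z: "z \<in> HE_circle n" "z \<noteq> HE_top n" and s: "s \<in> {0..1}"
  shows "circle_contract n s z \<in> HE_circle n"
proof -
  have "cmod (circle_contract n s z - HE_centre n) = 1 / real n"
    unfolding circle_contract_def using circle_contract_nondegenerate[OF assms]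
    by (simp add: norm_mult norm_divide norm_sgn)
  then show ?thesis unfolding HE_circle_sphere by (simp add: dist_norm norm_minus_commute)
qed

lemma circle_contract_ne_top:
  assumes n: "n \<ge> 1" and z: "z \<in> HE_circle n" "z \<noteq> HE_top n" and s: "s \<in> {0..1}"
  shows "circle_contract n s z \<noteq> HE_top n"
proof
  let ?w = "complex_of_real (1 - s) * z - HE_centre n"
  assume "circle_contract n s z = HE_top n"
  then have "complex_of_real (1 / real n) * sgn ?w = HE_centre n"
    unfolding circle_contract_def HE_top_def by simp
  then have "sgn ?w = \<i>" using n unfolding HE_centre_def by simp
  then have "?w = \<i> * complex_of_real (cmod ?w)"
    using circle_contract_nondegenerate[OF assms] by (metis mult.commute sgn_eq nonzero_divide_eq_eq
        of_real_eq_0_iff norm_eq_zero)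
  then have "complex_of_real (1 - s) * z = \<i> * complex_of_real (1 / real n + cmod ?w)"
    unfolding HE_centre_def by (simp add: algebra_simps)
  moreover have "1 / real n + cmod ?w > 0" using n by (simp add: add_pos_nonneg)
  ultimately show False using HE_circle_eq_top[OF n z(1), of "1 - s" "1 / real n + cmod ?w"] z(2) s by simp
qed

lemma continuous_on_circle_contract:
  assumes n: "n \<ge> 1" and S: "S \<subseteq> HE_circle n" "HE_top n \<notin> S"
  shows "continuous_on ({0..1} \<times> S) (\<lambda>p. circle_contract n (fst p) (snd p))"
proof -
  have "complex_of_real (1 - fst p) * snd p - HE_centre n \<noteq> 0" if "p \<in> {0..1} \<times> S" for p
    using circle_contract_nondegenerate[OF n] S that by (metis SigmaE prod.sel subsetD)
  then show ?thesis unfolding circle_contract_def by (intro continuous_intros) auto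
qed

text \<open>A deformation of HE minus the tops of the first M circles into the M-tail.\<close>
definition HE_deform :: "nat \<Rightarrow> real \<Rightarrow> complex \<Rightarrow> complex" where
  "HE_deform M s z = (if z \<in> HE_tail M then z else circle_contract (HE_index z) s z)"

lemma HE_deform_circle:
  assumes k: "k \<in> {1..M}" and z: "z \<in> HE_circle k"
  shows "HE_deform M s z = circle_contract k s z"
proof (cases "z \<in> HE_tail M")
  case True
  then have "z = 0" using HE_tail_circle_iff[OF _ z] k by auto
  then show ?thesis unfolding HE_deform_def using circle_contract_zero k zero_in_HE_tail by simp
next
  case False
  then have "HE_index z = k" using HE_index_eq[OF _ z] k zero_in_HE_tail by auto
  then show ?thesis unfolding HE_deform_def using False by simp
qed

lemma HE_deform_zero: "HE_deform M s 0 = 0"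
  unfolding HE_deform_def using zero_in_HE_tail by simp

lemma HE_deform_0: "z \<in> HE \<Longrightarrow> HE_deform M 0 z = z"
  unfolding HE_deform_def using circle_contract_0[OF HE_index] by simp

lemma HE_deform_1: "z \<in> HE \<Longrightarrow> HE_deform M 1 z \<in> HE_tail M"
  unfolding HE_deform_def using circle_contract_1[OF HE_index(1)] zero_in_HE_tail by simp

lemma HE_deform_in_HE:
  assumes z: "z \<in> HE" and s: "s \<in> {0..1}" and tops: "\<forall>k\<in>{1..M}. z \<noteq> HE_top k"
  shows "HE_deform M s z \<in> HE"
proof (cases "z \<in> HE_tail M")
  case False
  let ?n = "HE_index z"
  have n: "?n \<ge> 1" "z \<in> HE_circle ?n" using HE_index[OF z] by auto
  then have "?n \<le> M" using HE_tail_circle_iff[OF n] False by auto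
  then have "circle_contract ?n s z \<in> HE_circle ?n"
    using circle_contract_in_circle[OF n _ s] tops n(1) by auto
  then show ?thesis unfolding HE_deform_def using False HE_circle_subset[OF n(1)] by auto
qed (simp add: HE_deform_def z)

lemma HE_tail_circles_cover:
  "HE \<subseteq> {z. real (M + 1) * (cmod z)^2 \<le> 2 * Im z} \<union> (\<Union>k\<in>{1..M}. HE_circle k)"
proof
  fix z assume "z \<in> HE"
  then obtain n where n: "n \<ge> 1" "z \<in> HE_circle n" by (rule HE_circleE)
  show "z \<in> {z. real (M + 1) * (cmod z)^2 \<le> 2 * Im z} \<union> (\<Union>k\<in>{1..M}. HE_circle k)"
  proof (cases "n \<le> M")
    case False
    then have "z \<in> HE_tail M" using HE_tail_circle_iff[OF n] by auto
    then show ?thesis unfolding HE_tail_def by auto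
  qed (use n in auto)
qed

lemma continuous_on_HE_deform_circle:
  assumes k: "k \<in> {1..M}" and S: "S \<subseteq> HE_circle k" "HE_top k \<notin> S"
  shows "continuous_on ({0..1} \<times> S) (\<lambda>p. HE_deform M (fst p) (snd p))"
proof -
  have "continuous_on ({0..1} \<times> S) (\<lambda>p. circle_contract k (fst p) (snd p))"
    using k S by (intro continuous_on_circle_contract) auto
  then show ?thesis
  proof (rule continuous_on_eq)
    fix p :: "real \<times> complex" assume "p \<in> {0..1} \<times> S"
    then show "circle_contract k (fst p) (snd p) = HE_deform M (fst p) (snd p)"
      using HE_deform_circle[OF k, of "snd p" "fst p"] S by auto
  qed
qed

lemma continuous_on_HE_deform:
  assumes P: "P \<subseteq> HE" "closed P" and tops: "\<forall>k\<in>{1..M}. HE_top k \<notin> P"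
  shows "continuous_on ({0..1} \<times> P) (\<lambda>p. HE_deform M (fst p) (snd p))"
proof -
  let ?T = "{0..1::real} \<times> (P \<inter> {z. real (M + 1) * (cmod z)^2 \<le> 2 * Im z})"
  let ?C = "\<lambda>k. {0..1::real} \<times> (P \<inter> HE_circle k)"
  have closed_C: "closed (?C k)" for k
    by (intro closed_Times closed_Int P(2)) (simp_all add: HE_circle_sphere)
  have "continuous_on ?T (\<lambda>p. HE_deform M (fst p) (snd p))"
  proof (rule continuous_on_eq[of _ snd])
    show "continuous_on ?T snd" by (intro continuous_intros)
    fix p :: "real \<times> complex" assume "p \<in> ?T"
    then have "snd p \<in> HE_tail M" using P(1) unfolding HE_tail_def by auto
    then show "snd p = HE_deform M (fst p) (snd p)" unfolding HE_deform_def by simp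
  qed
  moreover have "continuous_on (\<Union>k\<in>{1..M}. ?C k) (\<lambda>p. HE_deform M (fst p) (snd p))"
  proof (rule continuous_on_closed_Union)
    fix k assume k: "k \<in> {1..M}"
    show "continuous_on (?C k) (\<lambda>p. HE_deform M (fst p) (snd p))"
      by (rule continuous_on_HE_deform_circle[OF k]) (use tops k in auto)
  qed (simp_all add: closed_C)
  moreover have "closed ?T"
    by (intro closed_Times closed_Int P(2) closed_Collect_le continuous_intros closed_atLeastAtMost)
  moreover have "closed (\<Union>k\<in>{1..M}. ?C k)"
    by (intro closed_UN finite_atLeastAtMost ballI closed_C)
  ultimately have "continuous_on (?T \<union> (\<Union>k\<in>{1..M}. ?C k)) (\<lambda>p. HE_deform M (fst p) (snd p))"
    by (rule continuous_on_closed_Un[rotated 2])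
  moreover have "{0..1::real} \<times> P = ?T \<union> (\<Union>k\<in>{1..M}. ?C k)"
  proof (intro equalityI subsetI)
    fix p :: "real \<times> complex" assume p: "p \<in> {0..1} \<times> P"
    then have "snd p \<in> HE" using P(1) by auto
    then have "snd p \<in> {z. real (M + 1) * (cmod z)^2 \<le> 2 * Im z} \<union> (\<Union>k\<in>{1..M}. HE_circle k)"
      by (rule subsetD[OF HE_tail_circles_cover])
    then show "p \<in> ?T \<union> (\<Union>k\<in>{1..M}. ?C k)" using p by (cases p) auto
  qed auto
  ultimately show ?thesis by (simp only:)
qed

lemma HE_deform_homotopic:
  assumes l: "HE_loop l" and tops: "\<forall>k\<in>{1..M}. HE_top k \<notin> path_image l"
  shows "homotopic_paths HE l (HE_deform M 1 \<circ> l)"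
proof -
  have p: "path l" and i: "path_image l \<subseteq> HE" and ends: "l 0 = 0" "l 1 = 0"
    using l unfolding HE_loop_def pathstart_def pathfinish_def by auto
  let ?F = "\<lambda>p. HE_deform M (fst p) (l (snd p))"
  have "continuous_on {0..1} l" using p unfolding path_def .
  then have c: "continuous_on ({0..1} \<times> {0..1}) (\<lambda>p::real \<times> real. (fst p, l (snd p)))"
    by (intro continuous_intros continuous_on_compose2[OF \<open>continuous_on {0..1} l\<close>]) auto
  have im: "(\<lambda>p::real \<times> real. (fst p, l (snd p))) ` ({0..1} \<times> {0..1}) \<subseteq> {0..1} \<times> path_image l"
    unfolding path_image_def by auto
  have "continuous_on ({0..1} \<times> {0..1}) ?F"
    using continuous_on_compose2[OF continuous_on_HE_deform[OF i closed_path_image[OF p] tops] c im]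
    by simp
  moreover have "?F p \<in> HE" if "p \<in> {0..1} \<times> {0..1}" for p
  proof (rule HE_deform_in_HE)
    have "l (snd p) \<in> path_image l" using that unfolding path_image_def by auto
    then show "l (snd p) \<in> HE" "\<forall>k\<in>{1..M}. l (snd p) \<noteq> HE_top k" using i tops by auto
  qed (use that in auto)
  moreover have "HE_deform M 0 (l x) = l x" if "x \<in> {0..1}" for x
    using that i by (intro HE_deform_0) (auto simp: path_image_def)
  ultimately show ?thesis unfolding homotopic_paths
    by (intro exI[of _ ?F]) (auto simp: pathstart_def pathfinish_def ends HE_deform_zero)
qed

lemma HE_hom_avoiding_loop:
  assumes "group G" "\<phi> \<in> hom HE_group G"
    and kill: "\<And>g. HE_loop g \<Longrightarrow> path_image g \<subseteq> HE_tail M \<Longrightarrow> \<phi> (HE_class g) = \<one>\<^bsub>G\<^esub>"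
    and l: "HE_loop l" and tops: "\<forall>k\<in>{1..M}. HE_top k \<notin> path_image l"
  shows "\<phi> (HE_class l) = \<phi> (HE_proj M (HE_class l))"
proof -
  let ?l = "HE_deform M 1 \<circ> l"
  have h: "homotopic_paths HE l ?l" by (rule HE_deform_homotopic[OF l tops])
  then have l': "HE_loop ?l"
    using l homotopic_paths_imp_path homotopic_paths_imp_subset
      homotopic_paths_imp_pathstart homotopic_paths_imp_pathfinish
    unfolding HE_loop_def by metis
  have tail: "path_image ?l \<subseteq> HE_tail M"
    using l HE_deform_1 unfolding HE_loop_def path_image_def by auto
  have "HE_class l = HE_class ?l" by (rule HE_class_eq[OF l l' h])
  then show ?thesis
    using kill[OF l' tail] HE_proj_tail_loop[OF l' tail] HE_hom_one[OF assms(1,2)] by simp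
qed

section \<open>Subdividing loops\<close>

text \<open>A path in the circle of z from the base point to z which avoids the top of that circle
  unless z is the top itself.\<close>
definition circle_arc :: "nat \<Rightarrow> complex \<Rightarrow> real \<Rightarrow> complex" where
  "circle_arc n z s =
     (if z = HE_top n then HE_centre n - \<i> * complex_of_real (1 / real n) * exp (\<i> * complex_of_real (pi * s))
      else circle_contract n (1 - s) z)"

definition HE_arc :: "complex \<Rightarrow> real \<Rightarrow> complex" where
  "HE_arc z = circle_arc (HE_index z) z"

lemma path_circle_arc:
  assumes n: "n \<ge> 1" and z: "z \<in> HE_circle n"
  shows "path (circle_arc n z)"
proof (cases "z = HE_top n")
  case False
  have "continuous_on ({0..1} \<times> {z}) (\<lambda>p. circle_contract n (fst p) (snd p))"
    by (rule continuous_on_circle_contract[OF n]) (use z False in auto)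
  moreover have "continuous_on {0..1} (\<lambda>s::real. (1 - s, z))" by (intro continuous_intros)
  moreover have "(\<lambda>s::real. (1 - s, z)) ` {0..1} \<subseteq> {0..1} \<times> {z}" by auto
  ultimately have "continuous_on {0..1} (\<lambda>s. circle_contract n (1 - s) z)"
    using continuous_on_compose2 by fastforce
  then show ?thesis unfolding path_def circle_arc_def using False by simp
next
  case True
  have "continuous_on {0..1} (\<lambda>s. HE_centre n - \<i> * complex_of_real (1 / real n) * exp (\<i> * complex_of_real (pi * s)))"
    by (intro continuous_intros)
  then show ?thesis unfolding path_def circle_arc_def using True by simp
qed

lemma circle_arc_start: "n \<ge> 1 \<Longrightarrow> circle_arc n z 0 = 0"
  unfolding circle_arc_def HE_centre_def using circle_contract_1 by simp

lemma circle_arc_finish: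
  assumes n: "n \<ge> 1" and z: "z \<in> HE_circle n"
  shows "circle_arc n z 1 = z"
proof (cases "z = HE_top n")
  case True
  have "exp (\<i> * complex_of_real pi) = -1" by simp
  then show ?thesis unfolding circle_arc_def using True by (simp add: HE_top_def HE_centre_eq)
qed (simp add: circle_arc_def circle_contract_0[OF n z])

lemma circle_arc_image:
  assumes n: "n \<ge> 1" and z: "z \<in> HE_circle n"
  shows "path_image (circle_arc n z) \<subseteq> HE_circle n"
proof
  fix w assume "w \<in> path_image (circle_arc n z)"
  then obtain s where s: "s \<in> {0..1}" "w = circle_arc n z s" unfolding path_image_def by auto
  show "w \<in> HE_circle n"
  proof (cases "z = HE_top n")
    case True
    have "cmod (w - HE_centre n) = 1 / real n"
      unfolding s(2) circle_arc_def using True by (simp add: norm_mult norm_divide)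
    then show ?thesis unfolding HE_circle_sphere by (simp add: dist_norm norm_minus_commute)
  next
    case False
    then show ?thesis
      unfolding s(2) circle_arc_def using circle_contract_in_circle[OF n z False] s(1) by simp
  qed
qed

lemma circle_arc_avoids_top:
  assumes n: "n \<ge> 1" and z: "z \<in> HE_circle n" "z \<noteq> HE_top n"
  shows "HE_top n \<notin> path_image (circle_arc n z)"
proof
  assume "HE_top n \<in> path_image (circle_arc n z)"
  then obtain s where "s \<in> {0..1}" "HE_top n = circle_arc n z s" unfolding path_image_def by auto
  then show False
    using circle_contract_ne_top[OF n z, of "1 - s"] z(2) unfolding circle_arc_def by simp
qed

lemma HE_arc_zero: "HE_arc 0 = (\<lambda>_. 0)"
proof -
  have n: "HE_index 0 \<ge> 1" by (rule HE_index(1)[OF zero_in_HE])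
  show ?thesis
    unfolding HE_arc_def circle_arc_def using HE_top_nonzero[OF n] circle_contract_zero[OF n] by auto
qed

lemma HE_arc:
  assumes z: "z \<in> HE"
  shows "path (HE_arc z)" "path_image (HE_arc z) \<subseteq> HE" "pathstart (HE_arc z) = 0" "pathfinish (HE_arc z) = z"
proof -
  note n = HE_index[OF z]
  show "path (HE_arc z)" unfolding HE_arc_def by (rule path_circle_arc[OF n])
  show "path_image (HE_arc z) \<subseteq> HE"
    unfolding HE_arc_def using circle_arc_image[OF n] HE_circle_subset[OF n(1)] by blast
  show "pathstart (HE_arc z) = 0" unfolding HE_arc_def pathstart_def by (rule circle_arc_start[OF n(1)])
  show "pathfinish (HE_arc z) = z" unfolding HE_arc_def pathfinish_def by (rule circle_arc_finish[OF n])
qed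

lemma path_image_HE_arc:
  assumes k: "k \<ge> 1" and z: "z \<in> HE_circle k"
  shows "path_image (HE_arc z) \<subseteq> HE_circle k"
proof (cases "z = 0")
  case True
  then show ?thesis using HE_arc_zero zero_in_HE_circle[OF k] by (simp add: path_image_def)
next
  case False
  have "HE_index z = k" by (rule HE_index_eq[OF k z False])
  then show ?thesis unfolding HE_arc_def using circle_arc_image[OF k z] by simp
qed

lemma HE_arc_avoids_top:
  assumes z: "z \<in> HE" and k: "k \<ge> 1" and ne: "z \<noteq> HE_top k"
  shows "HE_top k \<notin> path_image (HE_arc z)"
proof -
  note n = HE_index[OF z]
  have sub: "path_image (HE_arc z) \<subseteq> HE_circle (HE_index z)"
    unfolding HE_arc_def by (rule circle_arc_image[OF n])
  show ?thesis
  proof (cases "z = HE_top (HE_index z)")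
    case True
    then have "HE_index z \<noteq> k" using ne by auto
    then show ?thesis using sub HE_top_in_circle_iff[OF k n(1)] by auto
  next
    case False
    have "HE_top (HE_index z) \<notin> path_image (HE_arc z)"
      unfolding HE_arc_def by (rule circle_arc_avoids_top[OF n False])
    then show ?thesis using sub HE_top_in_circle_iff[OF k n(1)] by auto
  qed
qed

lemma homotopic_paths_telescope:
  fixes A B Q C :: "real \<Rightarrow> 'a::real_normed_vector"
  assumes A: "path A" "path_image A \<subseteq> S" and B: "path B" "path_image B \<subseteq> S"
    and Q: "path Q" "path_image Q \<subseteq> S" and C: "path C" "path_image C \<subseteq> S"
    and ends: "pathfinish A = pathfinish B" "pathstart Q = pathfinish B" "pathfinish Q = pathfinish C"
    and AQ: "homotopic_paths S (A +++ Q) A'"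
  shows "homotopic_paths S ((A +++ reversepath B) +++ (B +++ (Q +++ reversepath C))) (A' +++ reversepath C)"
proof -
  let ?R = "Q +++ reversepath C"
  have rB: "path (reversepath B)" "path_image (reversepath B) \<subseteq> S" using B by auto
  have rC: "path (reversepath C)" "path_image (reversepath C) \<subseteq> S" using C by auto
  have R: "path ?R" "path_image ?R \<subseteq> S" "pathstart ?R = pathfinish B"
    using Q rC ends by (auto simp: path_image_join)
  have BR: "path (B +++ ?R)" "path_image (B +++ ?R) \<subseteq> S" using B R by (auto simp: path_image_join)
  note paths = A B Q C rB rC R BR ends AQ
  have "homotopic_paths S ((A +++ reversepath B) +++ (B +++ ?R)) (A +++ (reversepath B +++ (B +++ ?R)))"
    by (rule homotopic_paths_sym, rule homotopic_paths_assoc) (use paths in auto)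
  also have "homotopic_paths S \<dots> (A +++ ((reversepath B +++ B) +++ ?R))"
    by (intro homotopic_paths_join homotopic_paths_assoc) (use paths in auto)
  also have "homotopic_paths S \<dots> (A +++ (linepath (pathfinish B) (pathfinish B) +++ ?R))"
    by (intro homotopic_paths_join homotopic_paths_linv) (use paths in auto)
  also have "homotopic_paths S \<dots> (A +++ ?R)"
    by (intro homotopic_paths_join homotopic_paths_lid') (use paths in auto)
  also have "homotopic_paths S \<dots> ((A +++ Q) +++ reversepath C)"
    by (rule homotopic_paths_assoc) (use paths in auto)
  also have "homotopic_paths S \<dots> (A' +++ reversepath C)"
    by (rule homotopic_paths_join) (use paths in auto)
  finally show ?thesis .
qed

lemma unit_grid:
  assumes "j < m"
  shows "real j / real m \<in> {0..1}" "real (Suc j) / real m \<in> {0..1}"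
    and "real j / real m \<le> real (Suc j) / real m"
    and "real (Suc j) / real m - real j / real m = 1 / real m"
  using assms by (auto simp: divide_le_eq_1 divide_right_mono field_simps)

definition HE_piece :: "(real \<Rightarrow> complex) \<Rightarrow> nat \<Rightarrow> nat \<Rightarrow> real \<Rightarrow> complex" where
  "HE_piece g m j = HE_arc (g (real j / real m)) +++
     (subpath (real j / real m) (real (Suc j) / real m) g +++ reversepath (HE_arc (g (real (Suc j) / real m))))"

definition HE_prefix :: "(real \<Rightarrow> complex) \<Rightarrow> nat \<Rightarrow> nat \<Rightarrow> real \<Rightarrow> complex" where
  "HE_prefix g m j = subpath 0 (real j / real m) g +++ reversepath (HE_arc (g (real j / real m)))"

lemma HE_loop_point: "HE_loop g \<Longrightarrow> t \<in> {0..1} \<Longrightarrow> g t \<in> HE"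
  unfolding HE_loop_def path_image_def by auto

lemma HE_loop_subpath:
  assumes "HE_loop g" "u \<in> {0..1}" "v \<in> {0..1}"
  shows "path (subpath u v g)" "path_image (subpath u v g) \<subseteq> HE"
  using assms path_image_subpath_subset[OF assms(2,3), of g] unfolding HE_loop_def by auto

lemma HE_loop_piece:
  assumes g: "HE_loop g" and j: "j < m"
  shows "HE_loop (HE_piece g m j)"
  using HE_arc[OF HE_loop_point[OF g unit_grid(1)[OF j]]] HE_arc[OF HE_loop_point[OF g unit_grid(2)[OF j]]]
    HE_loop_subpath[OF g unit_grid(1,2)[OF j]]
  unfolding HE_loop_def HE_piece_def by (auto simp: path_image_join)

lemma HE_loop_prefix:
  assumes g: "HE_loop g" and j: "j \<le> m" "m \<ge> 1"
  shows "HE_loop (HE_prefix g m j)"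
proof -
  have t: "real j / real m \<in> {0..1}" using j by auto
  have "g 0 = 0" using g unfolding HE_loop_def pathstart_def by simp
  then show ?thesis
    using HE_arc[OF HE_loop_point[OF g t]] HE_loop_subpath[OF g _ t, of 0]
    unfolding HE_loop_def HE_prefix_def by (auto simp: path_image_join)
qed

lemma HE_prefix_0: "HE_loop g \<Longrightarrow> HE_prefix g m 0 = (\<lambda>_. 0)"
  unfolding HE_loop_def pathstart_def
  by (auto simp: HE_prefix_def joinpaths_def subpath_def reversepath_def HE_arc_zero)

lemma HE_class_prefix_last:
  assumes g: "HE_loop g" and m: "m \<ge> 1"
  shows "HE_class (HE_prefix g m m) = HE_class g"
proof -
  have "g 1 = 0" using g unfolding HE_loop_def pathfinish_def by simp
  then have "HE_prefix g m m = g +++ linepath (pathfinish g) (pathfinish g)"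
    using m by (simp add: HE_prefix_def HE_arc_zero linepath_refl reversepath_def pathfinish_def)
  then have "homotopic_paths HE (HE_prefix g m m) g"
    using homotopic_paths_rid[of g HE] g unfolding HE_loop_def by simp
  then show ?thesis using HE_class_eq HE_loop_prefix[OF g order_refl m] g by blast
qed

lemma HE_prefix_Suc:
  assumes g: "HE_loop g" and j: "j < m"
  shows "HE_class (HE_prefix g m j) \<otimes>\<^bsub>HE_group\<^esub> HE_class (HE_piece g m j) = HE_class (HE_prefix g m (Suc j))"
proof -
  note grid = unit_grid[OF j]
  have z: "(0::real) \<in> {0..1}" by simp
  note Ba = HE_arc[OF HE_loop_point[OF g grid(1)]] and Bb = HE_arc[OF HE_loop_point[OF g grid(2)]]
  have AQ: "homotopic_paths HE (subpath 0 (real j / real m) g +++ subpath (real j / real m) (real (Suc j) / real m) g)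
      (subpath 0 (real (Suc j) / real m) g)"
    using g grid unfolding HE_loop_def by (intro homotopic_join_subpaths1) auto
  have "homotopic_paths HE (HE_prefix g m j +++ HE_piece g m j) (HE_prefix g m (Suc j))"
    unfolding HE_prefix_def HE_piece_def
    by (rule homotopic_paths_telescope[OF HE_loop_subpath[OF g z grid(1)] Ba(1,2)
          HE_loop_subpath[OF g grid(1,2)] Bb(1,2) _ _ _ AQ]) (use Ba Bb in auto)
  moreover have "HE_loop (HE_prefix g m j)" "HE_loop (HE_prefix g m (Suc j))"
    using HE_loop_prefix[OF g] j by auto
  ultimately show ?thesis
    by (metis HE_class_eq HE_class_mult HE_loop_join HE_loop_piece[OF g j])
qed

lemma path_image_HE_piece:
  assumes g: "HE_loop g" and j: "j < m"
  shows "path_image (HE_piece g m j) = path_image (HE_arc (g (real j / real m)))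
    \<union> g ` {real j / real m..real (Suc j) / real m} \<union> path_image (HE_arc (g (real (Suc j) / real m)))"
  using HE_arc[OF HE_loop_point[OF g unit_grid(1)[OF j]]] HE_arc[OF HE_loop_point[OF g unit_grid(2)[OF j]]]
    unit_grid(3)[OF j]
  unfolding HE_piece_def by (simp add: path_image_join path_image_subpath Un_assoc)

text \<open>The level is continuous off the base point and takes integer values, so it is constant
  along a connected set of parameters.\<close>
lemma HE_path_in_one_circle:
  assumes S: "connected S" and g: "continuous_on S g" "g ` S \<subseteq> HE" "0 \<notin> g ` S"
    and t0: "t0 \<in> S" and k: "k \<ge> 1" "g t0 \<in> HE_circle k"
  shows "g ` S \<subseteq> HE_circle k"
proof -
  have in_HE: "g t \<in> HE" and nonzero: "g t \<noteq> 0" if "t \<in> S" for t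
    using g(2,3) that by (auto simp: image_iff)
  have level: "HE_level (g t) = real (HE_index (g t))" if "t \<in> S" for t
    by (rule HE_level_index[OF in_HE[OF that] nonzero[OF that]])
  have "continuous_on S (\<lambda>t. HE_level (g t))"
    unfolding HE_level_def by (intro continuous_intros g(1)) (simp add: nonzero)
  then have "(\<lambda>t. HE_level (g t)) constant_on S"
  proof (rule continuous_discrete_range_constant[OF S])
    fix x assume x: "x \<in> S"
    have "1 \<le> norm (HE_level (g y) - HE_level (g x))" if "y \<in> S" "HE_level (g y) \<noteq> HE_level (g x)" for y
      using that unfolding level[OF x] level[OF \<open>y \<in> S\<close>]
      by (cases "HE_index (g y) < HE_index (g x)") auto
    then show "\<exists>e>0. \<forall>y. y \<in> S \<and> HE_level (g y) \<noteq> HE_level (g x) \<longrightarrow> e \<le> norm (HE_level (g y) - HE_level (g x))"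
      by (intro exI[of _ 1]) simp
  qed
  then obtain c where c: "\<And>t. t \<in> S \<Longrightarrow> HE_level (g t) = c" unfolding constant_on_def by blast
  have "c = real k" using c[OF t0] HE_level_circle[OF k nonzero[OF t0]] by simp
  then have "HE_index (g t) = k" if "t \<in> S" for t
    using c[OF that] level[OF that] by simp
  then show ?thesis using HE_index(2)[OF in_HE] by auto
qed

lemma HE_piece_in_circle:
  assumes g: "HE_loop g" and j: "j < m" and k: "k \<in> {1..M}"
    and fine: "\<And>t t'. t \<in> {0..1} \<Longrightarrow> t' \<in> {0..1} \<Longrightarrow> \<bar>t - t'\<bar> \<le> 1 / real m \<Longrightarrow> cmod (g t - g t') < 1 / real M"
    and t0: "t0 \<in> {real j / real m..real (Suc j) / real m}" "g t0 = HE_top k"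
  shows "path_image (HE_piece g m j) \<subseteq> HE_circle k"
proof -
  let ?I = "{real j / real m..real (Suc j) / real m}"
  note grid = unit_grid[OF j]
  have k1: "k \<ge> 1" using k by simp
  have sub: "?I \<subseteq> {0..1}" using grid by auto
  have "g t \<noteq> 0" if t: "t \<in> ?I" for t
  proof
    assume "g t = 0"
    have "\<bar>t - t0\<bar> \<le> 1 / real m" using t t0(1) grid(4) by auto
    then have "cmod (g t - g t0) < 1 / real M" using fine[of t t0] t t0(1) sub by blast
    then have "2 / real k < 1 / real M" using \<open>g t = 0\<close> t0(2) norm_HE_top[of k] by simp
    moreover have "1 / real M \<le> 2 / real k" using k by (simp add: frac_le)
    ultimately show False by simp
  qed
  then have "0 \<notin> g ` ?I" by auto
  moreover have "continuous_on ?I g"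
    using g sub unfolding HE_loop_def path_def by (blast intro: continuous_on_subset)
  moreover have "g ` ?I \<subseteq> HE" using HE_loop_point[OF g] sub by blast
  moreover have "g t0 \<in> HE_circle k" using t0(2) HE_top_in_circle_iff[OF k1 k1] by simp
  ultimately have circle: "g ` ?I \<subseteq> HE_circle k"
    using HE_path_in_one_circle[OF connected_Icc _ _ _ t0(1) k1] by blast
  have "path_image (HE_arc (g t)) \<subseteq> HE_circle k" if "t \<in> ?I" for t
    using path_image_HE_arc[OF k1] circle that by blast
  then show ?thesis unfolding path_image_HE_piece[OF g j] using circle grid(3) by auto
qed

lemma HE_piece_dichotomy:
  assumes g: "HE_loop g" and j: "j < m"
    and fine: "\<And>t t'. t \<in> {0..1} \<Longrightarrow> t' \<in> {0..1} \<Longrightarrow> \<bar>t - t'\<bar> \<le> 1 / real m \<Longrightarrow> cmod (g t - g t') < 1 / real M"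
  shows "(\<exists>k\<in>{1..M}. path_image (HE_piece g m j) \<subseteq> HE_circle k)
    \<or> (\<forall>k\<in>{1..M}. HE_top k \<notin> path_image (HE_piece g m j))"
proof (cases "\<exists>k\<in>{1..M}. HE_top k \<in> g ` {real j / real m..real (Suc j) / real m}")
  case True
  then obtain k t0 where "k \<in> {1..M}" "t0 \<in> {real j / real m..real (Suc j) / real m}" "g t0 = HE_top k"
    by (metis imageE)
  then show ?thesis using HE_piece_in_circle[OF g j _ fine] by blast
next
  case False
  let ?I = "{real j / real m..real (Suc j) / real m}"
  note grid = unit_grid[OF j]
  have sub: "?I \<subseteq> {0..1}" using grid by auto
  have "HE_top k \<notin> path_image (HE_piece g m j)" if k: "k \<in> {1..M}" for k
  proof -
    have "HE_top k \<notin> path_image (HE_arc (g t))" if t: "t \<in> ?I" for t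
    proof (rule HE_arc_avoids_top)
      show "g t \<in> HE" using HE_loop_point[OF g] sub t by blast
      show "g t \<noteq> HE_top k" using False k t by (metis imageI)
    qed (use k in simp)
    then show ?thesis unfolding path_image_HE_piece[OF g j] using False k grid(3) by auto
  qed
  then show ?thesis by blast
qed

lemma HE_loop_fine_grid:
  assumes g: "HE_loop g" and e: "e > 0"
  obtains m :: nat where "m \<ge> 1"
    and "\<And>t t'. t \<in> {0..1} \<Longrightarrow> t' \<in> {0..1} \<Longrightarrow> \<bar>t - t'\<bar> \<le> 1 / real m \<Longrightarrow> cmod (g t - g t') < e"
proof -
  have "uniformly_continuous_on {0..1} g"
    using g by (intro compact_uniformly_continuous) (auto simp: HE_loop_def path_def)
  then obtain d where d: "d > 0"
    and dd: "\<And>t t'. t \<in> {0..1} \<Longrightarrow> t' \<in> {0..1} \<Longrightarrow> dist t' t < d \<Longrightarrow> dist (g t') (g t) < e"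
    using e unfolding uniformly_continuous_on_def by metis
  obtain n where n: "inverse (real (Suc n)) < d" using reals_Archimedean[OF d] by blast
  show ?thesis
  proof
    show "Suc n \<ge> 1" by simp
    fix t t' assume "t \<in> {0..1}" "t' \<in> {0..1}" "\<bar>t - t'\<bar> \<le> 1 / real (Suc n)"
    then show "cmod (g t - g t') < e"
      using dd[of t' t] n by (simp add: dist_norm inverse_eq_divide)
  qed
qed

lemma hom_eq_comp_mult:
  assumes "\<phi> \<in> hom H G" "p \<in> hom H H" "a \<in> carrier H" "b \<in> carrier H"
    and "\<phi> a = \<phi> (p a)" "\<phi> b = \<phi> (p b)"
  shows "\<phi> (a \<otimes>\<^bsub>H\<^esub> b) = \<phi> (p (a \<otimes>\<^bsub>H\<^esub> b))"
  using assms by (simp add: hom_mult hom_in_carrier)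

lemma HE_hom_factors_through_proj:
  assumes G: "group G" and \<phi>: "\<phi> \<in> hom HE_group G" and M: "M \<ge> 1"
    and kill: "\<And>g. HE_loop g \<Longrightarrow> path_image g \<subseteq> HE_tail M \<Longrightarrow> \<phi> (HE_class g) = \<one>\<^bsub>G\<^esub>"
  shows "\<forall>x\<in>carrier HE_group. \<phi> x = \<phi> (HE_proj M x)"
proof
  fix x assume "x \<in> carrier HE_group"
  then obtain g where g: "HE_loop g" and x: "x = HE_class g" unfolding carrier_HE_group by blast
  obtain m where m: "m \<ge> 1"
    and fine: "\<And>t t'. t \<in> {0..1} \<Longrightarrow> t' \<in> {0..1} \<Longrightarrow> \<bar>t - t'\<bar> \<le> 1 / real m \<Longrightarrow> cmod (g t - g t') < 1 / real M"
    using HE_loop_fine_grid[OF g] M by (metis of_nat_0_less_iff zero_less_divide_1_iff less_le_trans zero_less_one)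
  have proj: "HE_proj M \<in> hom HE_group HE_group"
    unfolding HE_proj_eq_induced by (rule HE_induced_hom[OF based_HE_map_retract])
  have carrier: "HE_class l \<in> carrier HE_group" if "HE_loop l" for l
    using that carrier_HE_group by blast
  have piece: "\<phi> (HE_class (HE_piece g m j)) = \<phi> (HE_proj M (HE_class (HE_piece g m j)))" if j: "j < m" for j
    using HE_piece_dichotomy[OF g j fine] HE_proj_circle_loop[OF HE_loop_piece[OF g j]]
      HE_hom_avoiding_loop[OF G \<phi> kill HE_loop_piece[OF g j]] by auto
  have "\<phi> (HE_class (HE_prefix g m j)) = \<phi> (HE_proj M (HE_class (HE_prefix g m j)))" if "j \<le> m" for j
    using that
  proof (induction j)
    case 0
    have "path_image (\<lambda>_::real. 0::complex) \<subseteq> HE_tail M" by (auto simp: path_image_def zero_in_HE_tail)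
    then have "HE_proj M (HE_class (\<lambda>_. 0)) = HE_class (\<lambda>_. 0)"
      using HE_proj_tail_loop[OF HE_loop_const] unfolding one_HE_group by simp
    then show ?case unfolding HE_prefix_0[OF g] by simp
  next
    case (Suc j)
    then have j: "j < m" by simp
    have "\<phi> (HE_class (HE_prefix g m j) \<otimes>\<^bsub>HE_group\<^esub> HE_class (HE_piece g m j))
        = \<phi> (HE_proj M (HE_class (HE_prefix g m j) \<otimes>\<^bsub>HE_group\<^esub> HE_class (HE_piece g m j)))"
      using Suc j piece[OF j] HE_loop_prefix[OF g _ m] HE_loop_piece[OF g j]
      by (intro hom_eq_comp_mult[OF \<phi> proj] carrier) auto
    then show ?case unfolding HE_prefix_Suc[OF g j] .
  qed
  then show "\<phi> x = \<phi> (HE_proj M x)"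
    using HE_class_prefix_last[OF g m] x by (metis order_refl)
qed

lemma HE_tail_loop_shift:
  assumes g: "HE_loop g" and tail: "path_image g \<subseteq> HE_tail (M + N)"
  obtains g' where "HE_loop g'" "path_image g' \<subseteq> HE_tail M"
    and "HE_induced (HE_shift N) (HE_class g') = HE_class g"
proof
  let ?g' = "HE_unshift N \<circ> g"
  have tailN: "path_image g \<subseteq> HE_tail N" using tail HE_tail_antimono[of N "M + N"] by auto
  show tail': "path_image ?g' \<subseteq> HE_tail M"
    using tail HE_unshift_in_tail by (auto simp: path_image_compose)
  show g': "HE_loop ?g'"
    using g tail' HE_tail_subset path_continuous_image[OF _ continuous_on_subset[OF continuous_on_HE_unshift tailN]]
    unfolding HE_loop_def by (auto simp: pathstart_compose pathfinish_compose HE_unshift_def)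
  have "(HE_shift N \<circ> ?g') t = g t" if "t \<in> {0..1}" for t
  proof -
    have "g t \<in> HE_tail N" using tailN that unfolding path_image_def by auto
    then show ?thesis using HE_shift_unshift by simp
  qed
  then show "HE_induced (HE_shift N) (HE_class ?g') = HE_class g"
    unfolding HE_induced_class[OF based_HE_map_shift g']
    by (intro HE_class_cong HE_loop_compose[OF based_HE_map_shift] g' g)
qed

section \<open>Extensions of n-slender groups\<close>

lemma hom_factor_kills_shift:
  assumes "group G" "\<psi> \<in> hom HE_group G"
    and factor: "\<forall>x\<in>carrier HE_group. \<psi> x = \<psi> (HE_proj N x)"
    and x: "x \<in> carrier HE_group"
  shows "\<psi> (HE_induced (HE_shift N) x) = \<one>\<^bsub>G\<^esub>"
proof -
  obtain g where g: "HE_loop g" "x = HE_class g" using x unfolding carrier_HE_group by blast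
  have "path_image (HE_shift N \<circ> g) \<subseteq> HE_tail N"
    using g(1) HE_shift_in_tail unfolding HE_loop_def by (auto simp: path_image_compose)
  then show ?thesis
    using hom_factor_kills_tail[OF assms(1,2) factor HE_loop_compose[OF based_HE_map_shift g(1)]]
      HE_induced_class[OF based_HE_map_shift g(1)] g(2) by simp
qed

lemma n_slender_extension:
  assumes se: "short_exact K G Q i f" and K: "n_slender K" and Q: "n_slender Q"
  shows "n_slender G"
  unfolding n_slender_def
proof
  fix \<phi> assume \<phi>: "\<phi> \<in> hom HE_group G"
  from se have K_grp: "group K" and G_grp: "group G" and Q_grp: "group Q" and f: "f \<in> hom G Q"
    unfolding short_exact_def by auto
  obtain N where N: "\<forall>x\<in>carrier HE_group. (f \<circ> \<phi>) x = (f \<circ> \<phi>) (HE_proj N x)"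
    using Q hom_compose[OF \<phi> f] unfolding n_slender_def by blast
  let ?\<chi> = "\<phi> \<circ> HE_induced (HE_shift N)"
  have \<chi>: "?\<chi> \<in> hom HE_group G" by (rule hom_compose[OF HE_induced_hom[OF based_HE_map_shift[of N]] \<phi>])
  have "f (?\<chi> x) = \<one>\<^bsub>Q\<^esub>" if "x \<in> carrier HE_group" for x
    using hom_factor_kills_shift[OF Q_grp hom_compose[OF \<phi> f] N that] by simp
  then obtain \<psi> where \<psi>: "\<psi> \<in> hom HE_group K" and ker: "kernel HE_group K \<psi> = kernel HE_group G ?\<chi>"
    using short_exact_lift[OF se \<chi>] by blast
  obtain M where M: "\<forall>x\<in>carrier HE_group. \<psi> x = \<psi> (HE_proj M x)"
    using K \<psi> unfolding n_slender_def by blast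
  have "\<phi> (HE_class g) = \<one>\<^bsub>G\<^esub>" if g: "HE_loop g" "path_image g \<subseteq> HE_tail (M + N + 1)" for g
  proof -
    have "path_image g \<subseteq> HE_tail (M + N)" using g(2) HE_tail_antimono[of "M + N" "M + N + 1"] by simp
    then obtain g' where g': "HE_loop g'" "path_image g' \<subseteq> HE_tail M"
      and shift: "HE_induced (HE_shift N) (HE_class g') = HE_class g"
      using HE_tail_loop_shift[OF g(1)] by blast
    have "HE_class g' \<in> kernel HE_group K \<psi>"
      using hom_factor_kills_tail[OF K_grp \<psi> M g'] g'(1) unfolding kernel_def carrier_HE_group by blast
    then have "HE_class g' \<in> kernel HE_group G ?\<chi>" unfolding ker .
    then show ?thesis using shift unfolding kernel_def by simp
  qed
  then have "\<forall>x\<in>carrier HE_group. \<phi> x = \<phi> (HE_proj (M + N + 1) x)"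
    by (intro HE_hom_factors_through_proj[OF G_grp \<phi>]) simp_all
  then show "\<exists>N. \<forall>x\<in>carrier HE_group. \<phi> x = \<phi> (HE_proj N x)" ..
qed

theorem lemma3p2:
  fixes K :: "('k, 'a) monoid_scheme" and G :: "('g, 'b) monoid_scheme"
    and Q :: "('q, 'c) monoid_scheme" and i :: "'k \<Rightarrow> 'g" and f :: "'g \<Rightarrow> 'q"
  assumes "short_exact K G Q i f"
  shows "(n_slender K \<and> n_slender Q \<longrightarrow> n_slender G)
       \<and> (cm_slender TYPE('h) K \<and> cm_slender TYPE('h) Q \<longrightarrow> cm_slender TYPE('h) G)
       \<and> (lcH_slender TYPE('h) K \<and> lcH_slender TYPE('h) Q \<longrightarrow> lcH_slender TYPE('h) G)"
  using n_slender_extension[OF assms] cm_slender_extension[OF assms] lcH_slender_extension[OF assms]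
  by blast

end
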